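(* Let $p\geq5$, let $m_{-1}=0$, $m_0=1$, $m_{n+2}=(p-2)m_{n+1}-m_n$, and write $x=p-2$, $d=p-3$. Then every positive integer $n$ has exactly one representation $n=\sum_{i=0}^k a_i m_i$ with $k\ge 0$ and all $a_i\in\{1,\dots,p-2\}$ such that the word $a_k a_{k-1}\cdots a_0$ contains no factor of the form $x\,d^j\,x$ with $j\ge 0$ (i.e. a digit $p-2$, followed by $j$ digits $p-3$, followed by a digit $p-2$).
   Context: $p\ge5$ is a fixed integer; $m_n$ are the metallic numbers defined by the recurrence in the claim. Words are read with the most significant digit $a_k$ on the left. *)

theory Defs
  imports Main
begin

text \<open>Metallic numbers: m(-1) = 0, m 0 = 1, m (n+2) = (p-2) m (n+1) - m n.
  Index -1 is eliminated: m 1 = (p-2) m 0 - m(-1) = p - 2.\<close>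
fun metal :: "nat \<Rightarrow> nat \<Rightarrow> int" where
  "metal p 0 = 1"
| "metal p (Suc 0) = int p - 2"
| "metal p (Suc (Suc n)) = (int p - 2) * metal p (Suc n) - metal p n"

definition metal_val :: "nat \<Rightarrow> nat list \<Rightarrow> int" where
  "metal_val p ds = (\<Sum>i<length ds. int (ds ! i) * metal p i)"

text \<open>The word w (most significant digit first) contains a factor x d^j x,
  with x = p-2, d = p-3, j >= 0.\<close>
definition has_xdx_factor :: "nat \<Rightarrow> nat list \<Rightarrow> bool" where
  "has_xdx_factor p w = (\<exists>u v j. w = u @ [p - 2] @ replicate j (p - 3) @ [p - 2] @ v)"

end

theory Submission
  imports Defs
begin

text \<open>Read a word from its most significant digit with a two-state automaton whose state
  records whether the digits read so far end in \<open>x d\<^sup>j\<close>. Let \<open>L k = m 0 + \<dots> + m (k - 1)\<close>.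
  Shifted by \<open>L k\<close>, the values of the admissible words of length \<open>k\<close> run bijectively through
  \<open>[0, m k)\<close>, and through \<open>[0, m k - m (k - 1))\<close> from the pending state: a leading digit \<open>a\<close>
  contributes \<open>(a - 1) m k\<close>, each digit below the largest allowed one carries a full block of
  \<open>m k\<close> values, the largest allowed one a pending block, and the recurrence
  \<open>m (k + 1) = (p - 2) m k - m (k - 1)\<close> makes the blocks add up. Hence the admissible words of
  length \<open>k\<close> represent exactly \<open>[L k, L (k + 1))\<close>, and these intervals tile the non-negative
  integers.\<close>

lemma strict_mono_bracket_unique:
  fixes f :: "nat \<Rightarrow> 'a::linorder"
  assumes "strict_mono f" and "f i \<le> x" "x < f (Suc i)" and "f j \<le> x" "x < f (Suc j)"
  shows "i = j"
proof (rule ccontr)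
  assume "i \<noteq> j"
  then have "Suc i \<le> j \<or> Suc j \<le> i"
    by linarith
  then show False
    using assms strict_mono_less_eq[OF assms(1)] by (meson leD order_trans)
qed

section \<open>Metallic numbers\<close>

definition metal_pred :: "nat \<Rightarrow> nat \<Rightarrow> int" where
  "metal_pred p k = (if k = 0 then 0 else metal p (k - 1))"

lemma metal_pred_Suc [simp]: "metal_pred p (Suc k) = metal p k"
  by (simp add: metal_pred_def)

lemma metal_Suc: "metal p (Suc k) = (int p - 2) * metal p k - metal_pred p k"
  by (cases k) (auto simp: metal_pred_def)

lemma metal_pred_less_metal:
  assumes "p \<ge> 4"
  shows "0 \<le> metal_pred p k \<and> metal_pred p k < metal p k"
proof (induction k)
  case 0
  then show ?case by (simp add: metal_pred_def)
next
  case (Suc k)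
  have "1 * metal p k \<le> (int p - 3) * metal p k"
    using Suc assms by (intro mult_right_mono) auto
  moreover have "metal p (Suc k) - metal p k = (int p - 3) * metal p k - metal_pred p k"
    by (simp add: metal_Suc algebra_simps)
  ultimately have "metal p k < metal p (Suc k)"
    using Suc by linarith
  then show ?case
    using Suc by simp
qed

lemma metal_pos: "p \<ge> 4 \<Longrightarrow> 0 < metal p k"
  using metal_pred_less_metal[of p k] by linarith

definition metal_sum :: "nat \<Rightarrow> nat \<Rightarrow> int" where
  "metal_sum p k = (\<Sum>i<k. metal p i)"

lemma metal_sum_0 [simp]: "metal_sum p 0 = 0"
  by (simp add: metal_sum_def)

lemma metal_sum_Suc: "metal_sum p (Suc k) = metal_sum p k + metal p k"
  by (simp add: metal_sum_def)

lemma strict_mono_metal_sum: "p \<ge> 4 \<Longrightarrow> strict_mono (metal_sum p)"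
  by (simp add: strict_mono_Suc_iff metal_sum_Suc metal_pos)

lemma metal_sum_ge: "p \<ge> 4 \<Longrightarrow> int k \<le> metal_sum p k"
proof (induction k)
  case (Suc k)
  then show ?case
    using metal_pos[of p k] by (simp add: metal_sum_Suc)
qed simp

lemma metal_sum_bracket:
  assumes "p \<ge> 4" and "0 \<le> n"
  obtains k where "metal_sum p k \<le> n" and "n < metal_sum p (Suc k)"
proof -
  have "n < metal_sum p (Suc (nat n))"
    using metal_sum_ge[OF assms(1), of "Suc (nat n)"] assms(2) by simp
  then obtain k where "\<forall>i\<le>k. \<not> n < metal_sum p i" and "n < metal_sum p (Suc k)"
    using ex_least_nat_less[of "\<lambda>i. n < metal_sum p i"] assms(2) by auto
  then show thesis
    using that by (meson order_refl not_less)
qed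

section \<open>The automaton of admissible words\<close>

definition has_dx_prefix :: "nat \<Rightarrow> nat list \<Rightarrow> bool" where
  "has_dx_prefix p w = (\<exists>j v. w = replicate j (p - 3) @ [p - 2] @ v)"

lemma has_dx_prefix_Nil [simp]: "\<not> has_dx_prefix p []"
  by (simp add: has_dx_prefix_def)

lemma has_dx_prefix_Cons:
  "has_dx_prefix p (a # w) \<longleftrightarrow> a = p - 2 \<or> (a = p - 3 \<and> has_dx_prefix p w)"
proof
  assume "has_dx_prefix p (a # w)"
  then obtain j v where "a # w = replicate j (p - 3) @ [p - 2] @ v"
    by (auto simp: has_dx_prefix_def)
  then show "a = p - 2 \<or> (a = p - 3 \<and> has_dx_prefix p w)"
    by (cases j) (auto simp: has_dx_prefix_def)
next
  assume "a = p - 2 \<or> (a = p - 3 \<and> has_dx_prefix p w)"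
  then show "has_dx_prefix p (a # w)"
  proof
    assume "a = p - 2"
    then have "a # w = replicate 0 (p - 3) @ [p - 2] @ w" by simp
    then show ?thesis unfolding has_dx_prefix_def by blast
  next
    assume "a = p - 3 \<and> has_dx_prefix p w"
    then obtain j v where "a = p - 3" "w = replicate j (p - 3) @ [p - 2] @ v"
      by (auto simp: has_dx_prefix_def)
    then have "a # w = replicate (Suc j) (p - 3) @ [p - 2] @ v" by simp
    then show ?thesis unfolding has_dx_prefix_def by blast
  qed
qed

lemma has_xdx_factor_Cons:
  "has_xdx_factor p (a # w) \<longleftrightarrow> has_xdx_factor p w \<or> (a = p - 2 \<and> has_dx_prefix p w)"
proof
  assume "has_xdx_factor p (a # w)"
  then obtain u v j where eq: "a # w = u @ [p - 2] @ replicate j (p - 3) @ [p - 2] @ v"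
    by (auto simp: has_xdx_factor_def)
  show "has_xdx_factor p w \<or> (a = p - 2 \<and> has_dx_prefix p w)"
  proof (cases u)
    case Nil
    then show ?thesis using eq by (auto simp: has_dx_prefix_def)
  next
    case (Cons b u')
    then show ?thesis using eq by (auto simp: has_xdx_factor_def)
  qed
next
  assume "has_xdx_factor p w \<or> (a = p - 2 \<and> has_dx_prefix p w)"
  then show "has_xdx_factor p (a # w)"
  proof
    assume "has_xdx_factor p w"
    then obtain u v j where "w = u @ [p - 2] @ replicate j (p - 3) @ [p - 2] @ v"
      by (auto simp: has_xdx_factor_def)
    then have "a # w = (a # u) @ [p - 2] @ replicate j (p - 3) @ [p - 2] @ v" by simp
    then show ?thesis unfolding has_xdx_factor_def by blast
  next
    assume "a = p - 2 \<and> has_dx_prefix p w"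
    then obtain j v where "a = p - 2" "w = replicate j (p - 3) @ [p - 2] @ v"
      by (auto simp: has_dx_prefix_def)
    then have "a # w = [] @ [p - 2] @ replicate j (p - 3) @ [p - 2] @ v" by simp
    then show ?thesis unfolding has_xdx_factor_def by blast
  qed
qed

text \<open>The state \<open>pending\<close> records whether the digits read so far end in \<open>x d\<^sup>j\<close>; then
  \<open>x\<close> would complete a forbidden factor, so \<open>d\<close> is the largest digit allowed next.\<close>

definition top_digit :: "nat \<Rightarrow> bool \<Rightarrow> nat" where
  "top_digit p pending = (if pending then p - 3 else p - 2)"

fun admissible :: "nat \<Rightarrow> bool \<Rightarrow> nat list \<Rightarrow> bool" where
  "admissible p pending [] = True"
| "admissible p pending (a # w) \<longleftrightarrow>
     1 \<le> a \<and> a \<le> top_digit p pending \<and> admissible p (a = top_digit p pending) w"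

lemma admissible_iff:
  assumes "p \<ge> 4"
  shows "admissible p pending w \<longleftrightarrow>
     set w \<subseteq> {1..p - 2} \<and> \<not> has_xdx_factor p w \<and> (pending \<longrightarrow> \<not> has_dx_prefix p w)"
proof (induction w arbitrary: pending)
  case Nil
  then show ?case by (simp add: has_xdx_factor_def)
next
  case (Cons a w)
  have "p - 2 = Suc (p - 3)"
    using assms by simp
  then show ?case
    by (cases pending) (auto simp: Cons.IH top_digit_def has_xdx_factor_Cons has_dx_prefix_Cons)
qed

section \<open>Offsets of admissible words\<close>

definition word_val :: "nat \<Rightarrow> nat list \<Rightarrow> int" where
  "word_val p w = metal_val p (rev w)"

lemma word_val_Cons: "word_val p (a # w) = int a * metal p (length w) + word_val p w"
  by (simp add: word_val_def metal_val_def lessThan_Suc nth_append)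

definition offset :: "nat \<Rightarrow> nat list \<Rightarrow> int" where
  "offset p w = word_val p w - metal_sum p (length w)"

lemma offset_Nil [simp]: "offset p [] = 0"
  by (simp add: offset_def word_val_def metal_val_def)

lemma offset_Cons: "offset p (a # w) = (int a - 1) * metal p (length w) + offset p w"
  by (simp add: offset_def word_val_Cons metal_sum_Suc algebra_simps)

definition offset_bound :: "nat \<Rightarrow> bool \<Rightarrow> nat \<Rightarrow> int" where
  "offset_bound p pending k = metal p k - (if pending then metal_pred p k else 0)"

lemma offset_bound_0 [simp]: "offset_bound p pending 0 = 1"
  by (simp add: offset_bound_def metal_pred_def)

lemma offset_bound_pos: "p \<ge> 4 \<Longrightarrow> 0 < offset_bound p pending k"
  using metal_pred_less_metal[of p k] by (simp add: offset_bound_def)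

lemma offset_bound_le_metal: "p \<ge> 4 \<Longrightarrow> offset_bound p pending k \<le> metal p k"
  using metal_pred_less_metal[of p k] by (simp add: offset_bound_def)

lemma offset_bound_Suc:
  assumes "p \<ge> 4"
  shows "offset_bound p pending (Suc k)
           = (int (top_digit p pending) - 1) * metal p k + offset_bound p True k"
  using assms
  by (cases pending) (simp_all add: offset_bound_def top_digit_def metal_Suc of_nat_diff algebra_simps)

lemma offset_bounds:
  assumes "p \<ge> 4" and "admissible p pending w"
  shows "0 \<le> offset p w \<and> offset p w < offset_bound p pending (length w)"
  using assms(2)
proof (induction w arbitrary: pending)
  case Nil
  then show ?case by simp
next
  case (Cons a w)
  define M where "M = metal p (length w)"
  define t where "t = top_digit p pending"
  have a: "1 \<le> a" "a \<le> t" and adm: "admissible p (a = t) w"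
    using Cons.prems by (auto simp: t_def)
  have IH: "0 \<le> offset p w" "offset p w < offset_bound p (a = t) (length w)"
    using Cons.IH[OF adm] by auto
  have M: "0 < M"
    using metal_pos[OF assms(1)] by (simp add: M_def)
  have "0 \<le> (int a - 1) * M"
    using a M by simp
  moreover have "(int a - 1) * M + offset p w < (int t - 1) * M + offset_bound p True (length w)"
  proof (cases "a = t")
    case True
    then show ?thesis using IH by simp
  next
    case False
    then have "int a * M \<le> (int t - 1) * M"
      using a M by (intro mult_right_mono) auto
    moreover have "offset p w < M"
      using IH False by (simp add: offset_bound_def M_def)
    moreover have "0 < offset_bound p True (length w)"
      using offset_bound_pos[OF assms(1)] .
    ultimately show ?thesis by (simp add: algebra_simps)
  qed
  ultimately show ?case
    using IH by (simp add: offset_Cons offset_bound_Suc[OF assms(1)] M_def t_def)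
qed

lemma offset_inj:
  assumes "p \<ge> 4" and "length w1 = length w2"
    and "admissible p pending w1" and "admissible p pending w2" and "offset p w1 = offset p w2"
  shows "w1 = w2"
  using assms(2-)
proof (induction w1 arbitrary: pending w2)
  case Nil
  then show ?case by simp
next
  case (Cons a r1)
  then obtain b r2 where w2: "w2 = b # r2" and len: "length r1 = length r2"
    by (cases w2) auto
  define M where "M = metal p (length r1)"
  define t where "t = top_digit p pending"
  have adm1: "admissible p (a = t) r1" and adm2: "admissible p (b = t) r2"
    using Cons.prems w2 by (auto simp: t_def)
  have r1: "0 \<le> offset p r1" "offset p r1 < M"
    using offset_bounds[OF assms(1) adm1] offset_bound_le_metal[OF assms(1), of "a = t" "length r1"]
    by (auto simp: M_def)
  have r2: "0 \<le> offset p r2" "offset p r2 < M"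
    using offset_bounds[OF assms(1) adm2] offset_bound_le_metal[OF assms(1), of "b = t" "length r2"]
      len by (auto simp: M_def)
  have eq: "(int a - 1) * M + offset p r1 = (int b - 1) * M + offset p r2"
    using Cons.prems w2 len by (simp add: offset_Cons M_def)
  have "int a - 1 = ((int a - 1) * M + offset p r1) div M"
    using r1 by simp
  also have "\<dots> = int b - 1"
    using r2 by (simp add: eq)
  finally have ab: "a = b"
    by simp
  then have "r1 = r2"
    using Cons.IH[OF _ adm1] adm2 eq len by simp
  then show ?case
    using ab w2 by simp
qed

lemma offset_surj:
  assumes "p \<ge> 4" and "0 \<le> v" and "v < offset_bound p pending k"
  shows "\<exists>w. length w = k \<and> admissible p pending w \<and> offset p w = v"
  using assms(2,3)
proof (induction k arbitrary: pending v)
  case 0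
  then show ?case by simp
next
  case (Suc k)
  define M where "M = metal p k"
  define t where "t = top_digit p pending"
  have M: "0 < M"
    using metal_pos[OF assms(1)] by (simp add: M_def)
  have t: "1 \<le> t"
    using assms(1) by (auto simp: t_def top_digit_def)
  have bound: "v < (int t - 1) * M + offset_bound p True k"
    using Suc.prems(2) by (simp add: offset_bound_Suc[OF assms(1)] t_def M_def)
  show ?case
  proof (cases "v div M + 1 < int t")
    case True
    define a where "a = nat (v div M) + 1"
    have "0 \<le> v mod M" "v mod M < offset_bound p False k"
      using M by (simp_all add: offset_bound_def M_def)
    then obtain w where w: "length w = k" "admissible p False w" "offset p w = v mod M"
      using Suc.IH by blast
    have a: "int a = v div M + 1"
      using Suc.prems(1) M by (simp add: a_def pos_imp_zdiv_nonneg_iff)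
    then have "a < t"
      using True by linarith
    then have "admissible p pending (a # w)"
      using w by (simp add: t_def a_def)
    moreover have "offset p (a # w) = v"
      using w a by (simp add: offset_Cons M_def div_mult_mod_eq)
    ultimately show ?thesis
      using w(1) by (intro exI[of _ "a # w"]) simp
  next
    case False
    have "(int t - 1) * M \<le> (v div M) * M"
      using False M by (intro mult_right_mono) auto
    also have "\<dots> \<le> v"
      using div_mult_mod_eq[of v M] pos_mod_sign[OF M, of v] by linarith
    finally have "0 \<le> v - (int t - 1) * M" "v - (int t - 1) * M < offset_bound p True k"
      using bound by simp_all
    then obtain w where w: "length w = k" "admissible p True w" "offset p w = v - (int t - 1) * M"
      using Suc.IH by blast
    then have "admissible p pending (t # w)" "offset p (t # w) = v"
      using t by (simp_all add: t_def offset_Cons M_def)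
    then show ?thesis
      using w(1) by (intro exI[of _ "t # w"]) simp
  qed
qed

lemma bij_betw_offset:
  assumes "p \<ge> 4"
  shows "bij_betw (offset p) {w. length w = k \<and> admissible p pending w} {0..<offset_bound p pending k}"
  unfolding bij_betw_def
proof
  show "inj_on (offset p) {w. length w = k \<and> admissible p pending w}"
    using offset_inj[OF assms] by (auto intro: inj_onI)
  show "offset p ` {w. length w = k \<and> admissible p pending w} = {0..<offset_bound p pending k}"
    using offset_bounds[OF assms] offset_surj[OF assms] by fastforce
qed

section \<open>Representations of the integers\<close>

lemma word_val_bounds:
  assumes "p \<ge> 4" and "admissible p False w"
  shows "metal_sum p (length w) \<le> word_val p w \<and> word_val p w < metal_sum p (Suc (length w))"
  using offset_bounds[OF assms]
  by (simp add: offset_def offset_bound_def metal_sum_Suc)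

lemma bij_betw_word_val:
  assumes "p \<ge> 4"
  shows "bij_betw (word_val p) {w. admissible p False w} {0..}"
  unfolding bij_betw_def
proof
  show "inj_on (word_val p) {w. admissible p False w}"
  proof (rule inj_onI, clarsimp)
    fix w1 w2
    assume adm: "admissible p False w1" "admissible p False w2"
      and eq: "word_val p w1 = word_val p w2"
    have "length w1 = length w2"
      using word_val_bounds[OF assms adm(1)] word_val_bounds[OF assms adm(2)] eq
      by (intro strict_mono_bracket_unique[OF strict_mono_metal_sum[OF assms]]) auto
    then show "w1 = w2"
      using bij_betw_offset[OF assms, of "length w1" False] adm eq
      by (auto simp: bij_betw_def inj_on_def offset_def)
  qed
  have "0 \<le> word_val p w" if "admissible p False w" for w
    using word_val_bounds[OF assms that] metal_sum_ge[OF assms, of "length w"] by linarith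
  then show "word_val p ` {w. admissible p False w} = {0..}"
  proof (intro equalityI subsetI)
    fix n :: int
    assume "n \<in> {0..}"
    then obtain k where k: "metal_sum p k \<le> n" "n < metal_sum p (Suc k)"
      using metal_sum_bracket[OF assms] by auto
    then have "n - metal_sum p k \<in> {0..<offset_bound p False k}"
      by (simp add: offset_bound_def metal_sum_Suc)
    then have "n - metal_sum p k \<in> offset p ` {w. length w = k \<and> admissible p False w}"
      using bij_betw_imp_surj_on[OF bij_betw_offset[OF assms]] by blast
    then obtain w where "length w = k" "admissible p False w" "offset p w = n - metal_sum p k"
      by auto
    then show "n \<in> word_val p ` {w. admissible p False w}"
      by (auto simp: offset_def)
  qed auto
qed

theorem corollary2:
  fixes p n :: nat
  assumes "p \<ge> 5" and "n > 0"
  shows "\<exists>!ds :: nat list. ds \<noteq> [] \<and> set ds \<subseteq> {1..p - 2}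
           \<and> \<not> has_xdx_factor p (rev ds) \<and> int n = metal_val p ds"
proof -
  have p: "p \<ge> 4"
    using assms(1) by simp
  have repr_iff:
    "ds \<noteq> [] \<and> set ds \<subseteq> {1..p - 2} \<and> \<not> has_xdx_factor p (rev ds) \<and> int n = metal_val p ds
      \<longleftrightarrow> admissible p False (rev ds) \<and> word_val p (rev ds) = int n" for ds
    using assms(2) by (auto simp: admissible_iff[OF p] word_val_def metal_val_def)
  note bij = bij_betw_word_val[OF p]
  have "int n \<in> word_val p ` {w. admissible p False w}"
    using bij_betw_imp_surj_on[OF bij] by simp
  then obtain w where w: "admissible p False w" "word_val p w = int n"
    by auto
  show ?thesis
    unfolding repr_iff
  proof (rule ex1I[of _ "rev w"])
    fix ds
    assume "admissible p False (rev ds) \<and> word_val p (rev ds) = int n"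
    then have "rev ds = w"
      using inj_onD[OF bij_betw_imp_inj_on[OF bij]] w by auto
    then show "ds = rev w"
      by auto
  qed (use w in simp)
qed

end
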